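(* Let $\bar P=(P,P^* )\neq\bar Q=(Q,Q^* )$ be elements of $\bar M$. (1) If $P,P^*,Q,Q^*$ are all nonempty, $P\ne Q$ and $P^*\neq Q^*$, then $\bar P$ and $\bar Q$ are $T_1$ separated; moreover, no future-directed timelike curve $\gamma$ with $I^-[\gamma]=P$ has $\bar Q$ as a future endpoint (i.e. it is not true that every open neighbourhood of $\bar Q$ contains $\Phi$ of a final segment of $\gamma$). (2) If $P,P^*$ are nonempty and $Q^*=\emptyset$, then $\bar P$ and $\bar Q$ are $T_0$ separated. (3) If $P^*=\emptyset$ and $Q^*=\emptyset$, then $\bar P$ and $\bar Q$ are $T_1$ separated. (4) If $P^*=\emptyset$ and $Q=\emptyset$, then $\bar P$ and $\bar Q$ are $T_1$ separated. All separation statements refer to the topology $\bar{\mathcal T}$.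
   Context: Let $M$ be a strongly causal spacetime (a time-oriented Lorentzian manifold in which every point has a neighbourhood that no non-spacelike curve enters more than once). $I^\pm(p)$ denotes the chronological future/past of $p\in M$, $I^\pm(S)=\bigcup_{s\in S}I^\pm(s)$, and for a curve $\gamma$ we write $I^\pm[\gamma]=I^\pm(\gamma)$. A past-set is a set $I^-(S)$ with $S\subset M$. An IP is a nonempty past-set that is not the union of two proper subsets which are past-sets. IFs are defined dually. For an IP $P$, $f(P)=I^+(\{x:P\subset I^-(x)\})$. For an IF $P^*$, $p(P^* )=I^-(\{x:P^*\subset I^+(x)\})$. $R_{pf}$ is the set of pairs $(P,Q^* )$ (with $P$ an IP and $Q^*$ an IF) such that both of the following hold: - $Q^*$ is a maximal IF (under inclusion) contained in $f(P)$; - $P$ is a maximal IP contained in $p(Q^* )$. $\bar M$ is the set of pairs $\bar P=(P,P^* )$ such that one of the following holds: - $(P,P^* )\in R_{pf}$; - $P=\emptyset$ and $P^*$ is an IF occurring in no pair of $R_{pf}$; - $P^*=\emptyset$ and $P$ is an IP occurring in no pair of $R_{pf}$. $\Phi(p)=(I^-(p),I^+(p))$ is an injection $M\to\bar M$. Limits of sets: for past-sets $P_n$ and $Q$, $Q=\lim P_n$ means both of the following: - (i) each $x\in Q$ lies in $P_n$ for all sufficiently large $n$; - (ii) for each $x\in M$ with $I^-(x)\not\subset Q$, one has $I^-(x)\not\subset P_n$ for all sufficiently large $n$. Limits of future-sets are defined dually. For $\bar S\subset\bar M$ define: - $L^+_{IF}(\bar S)=\{\bar Q:Q^*\ne\emptyset,\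 Q^*\subset\bigcup_{\bar R\in\bar S}R^*\}$; - $L^-_{IP}(\bar S)=\{\bar Q:Q\ne\emptyset,\ Q\subset\bigcup_{\bar R\in\bar S}R\}$; - $Cl_{FB}(\bar S)=\bar S\cup\{\bar Q:Q^*=\emptyset,\ Q=\lim R_n\text{ for some sequence }\bar R_n\in\bar S\}$; - $Cl_{PB}(\bar S)=\bar S\cup\{\bar Q:Q=\emptyset,\ Q^*=\lim R^*_n\text{ for some sequence }\bar R_n\in\bar S\}$; - $L^+(\bar S)=Cl_{FB}[\bar S\cup L^+_{IF}(\bar S)]$; - $L^-(\bar S)=Cl_{PB}[\bar S\cup L^-_{IP}(\bar S)]$. $\bar{\mathcal T}$ is the coarsest topology on $\bar M$ in which $\bar M\setminus L^\pm(\bar S)$ are open for every $\bar S\subset\bar M$. Separation notions for two points $a\neq b$: - $T_0$ separated: some open set contains exactly one of them; - $T_1$ separated: there is an open set containing $a$ but not $b$, and an open set containing $b$ but not $a$. *)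

theory Defs
  imports "HOL-Analysis.Analysis"
begin

coinductive Cinf_on :: "'a::euclidean_space set \<Rightarrow> ('a \<Rightarrow> 'b::real_normed_vector) \<Rightarrow> bool" where
  "\<lbrakk>\<forall>x\<in>U. f differentiable (at x);
    \<forall>b\<in>Basis. Cinf_on U (\<lambda>x. frechet_derivative f (at x) b)\<rbrakk> \<Longrightarrow> Cinf_on U f"

type_synonym ('m, 'a) chart = "'m set \<times> ('m \<Rightarrow> 'a)"

definition trans_map :: "('m, 'a) chart \<Rightarrow> ('m, 'a) chart \<Rightarrow> 'a \<Rightarrow> 'a" where
  "trans_map c d = snd d \<circ> inv_into (fst c) (snd c)"

definition smooth_atlas :: "('m::topological_space, 'a::euclidean_space) chart set \<Rightarrow> bool" where
  "smooth_atlas A \<longleftrightarrow>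
     (\<Union>c\<in>A. fst c) = UNIV \<and>
     (\<forall>c\<in>A. open (fst c) \<and> open (snd c ` fst c) \<and>
              (\<exists>\<psi>. homeomorphism (fst c) (snd c ` fst c) (snd c) \<psi>)) \<and>
     (\<forall>c\<in>A. \<forall>d\<in>A. Cinf_on (snd c ` (fst c \<inter> fst d)) (trans_map c d))"

text \<open>Lorentzian signature (-,+,...,+) of a symmetric bilinear form.\<close>
definition lorentzian_form :: "('a::euclidean_space \<Rightarrow> 'a \<Rightarrow> real) \<Rightarrow> bool" where
  "lorentzian_form B \<longleftrightarrow> bilinear B \<and> (\<forall>u v. B u v = B v u) \<and>
     (\<exists>v. B v v < 0 \<and> (\<forall>w. w \<noteq> 0 \<and> B v w = 0 \<longrightarrow> B w w > 0))"

text \<open>G c x u v: metric components in chart c at coordinate point x.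
  T c x: components of a time-orientation vector field in chart c.\<close>
definition spacetime ::
  "('m::{t2_space, second_countable_topology}, 'a::euclidean_space) chart set
   \<Rightarrow> (('m, 'a) chart \<Rightarrow> 'a \<Rightarrow> 'a \<Rightarrow> 'a \<Rightarrow> real)
   \<Rightarrow> (('m, 'a) chart \<Rightarrow> 'a \<Rightarrow> 'a) \<Rightarrow> bool" where
  "spacetime A G T \<longleftrightarrow>
     DIM('a) \<ge> 2 \<and> smooth_atlas A \<and>
     (\<forall>c\<in>A. \<forall>x\<in>snd c ` fst c. lorentzian_form (G c x)) \<and>
     (\<forall>c\<in>A. \<forall>u v. Cinf_on (snd c ` fst c) (\<lambda>x. G c x u v)) \<and>
     (\<forall>c\<in>A. \<forall>d\<in>A. \<forall>x\<in>snd c ` (fst c \<inter> fst d). \<forall>u v.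
        G c x u v = G d (trans_map c d x)
                         (frechet_derivative (trans_map c d) (at x) u)
                         (frechet_derivative (trans_map c d) (at x) v)) \<and>
     (\<forall>c\<in>A. continuous_on (snd c ` fst c) (T c)) \<and>
     (\<forall>c\<in>A. \<forall>x\<in>snd c ` fst c. G c x (T c x) (T c x) < 0) \<and>
     (\<forall>c\<in>A. \<forall>d\<in>A. \<forall>x\<in>snd c ` (fst c \<inter> fst d).
        T d (trans_map c d x) = frechet_derivative (trans_map c d) (at x) (T c x))"

definition future_timelike :: "(('m, 'a) chart \<Rightarrow> 'a \<Rightarrow> 'a \<Rightarrow> 'a \<Rightarrow> real)
   \<Rightarrow> (('m, 'a) chart \<Rightarrow> 'a \<Rightarrow> 'a) \<Rightarrow> ('m, 'a) chart \<Rightarrow> 'a \<Rightarrow> 'a::euclidean_space \<Rightarrow> bool" where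
  "future_timelike G T c x v \<longleftrightarrow> G c x v v < 0 \<and> G c x v (T c x) < 0"

definition future_causal :: "(('m, 'a) chart \<Rightarrow> 'a \<Rightarrow> 'a \<Rightarrow> 'a \<Rightarrow> real)
   \<Rightarrow> (('m, 'a) chart \<Rightarrow> 'a \<Rightarrow> 'a) \<Rightarrow> ('m, 'a) chart \<Rightarrow> 'a \<Rightarrow> 'a::euclidean_space \<Rightarrow> bool" where
  "future_causal G T c x v \<longleftrightarrow> v \<noteq> 0 \<and> G c x v v \<le> 0 \<and> G c x v (T c x) < 0"

definition C1_piece :: "('m::topological_space, 'a::euclidean_space) chart set
   \<Rightarrow> (('m, 'a) chart \<Rightarrow> 'a \<Rightarrow> 'a \<Rightarrow> bool) \<Rightarrow> (real \<Rightarrow> 'm) \<Rightarrow> real \<Rightarrow> real \<Rightarrow> bool" where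
  "C1_piece A good \<gamma> s s' \<longleftrightarrow>
     continuous_on {s..s'} \<gamma> \<and>
     (\<exists>\<gamma>'. \<forall>c\<in>A.
        continuous_on {t\<in>{s..s'}. \<gamma> t \<in> fst c} (\<gamma>' c) \<and>
        (\<forall>t\<in>{s..s'}. \<gamma> t \<in> fst c \<longrightarrow>
           ((snd c \<circ> \<gamma>) has_vector_derivative \<gamma>' c t) (at t within {s..s'}) \<and>
           good c (snd c (\<gamma> t)) (\<gamma>' c t)))"

definition pw_curve :: "('m::topological_space, 'a::euclidean_space) chart set
   \<Rightarrow> (('m, 'a) chart \<Rightarrow> 'a \<Rightarrow> 'a \<Rightarrow> bool) \<Rightarrow> (real \<Rightarrow> 'm) \<Rightarrow> real \<Rightarrow> real \<Rightarrow> bool" where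
  "pw_curve A good \<gamma> a b \<longleftrightarrow> a < b \<and>
     (\<exists>K. finite K \<and> a \<in> K \<and> b \<in> K \<and> K \<subseteq> {a..b} \<and>
        (\<forall>s\<in>K. \<forall>s'\<in>K. s < s' \<and> {s<..<s'} \<inter> K = {} \<longrightarrow> C1_piece A good \<gamma> s s'))"

definition chron :: "('m::topological_space, 'a::euclidean_space) chart set
   \<Rightarrow> (('m, 'a) chart \<Rightarrow> 'a \<Rightarrow> 'a \<Rightarrow> 'a \<Rightarrow> real) \<Rightarrow> (('m, 'a) chart \<Rightarrow> 'a \<Rightarrow> 'a)
   \<Rightarrow> 'm \<Rightarrow> 'm \<Rightarrow> bool" where
  "chron A G T p q \<longleftrightarrow>
     (\<exists>\<gamma>. pw_curve A (future_timelike G T) \<gamma> 0 1 \<and> \<gamma> 0 = p \<and> \<gamma> 1 = q)"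

definition strongly_causal :: "('m::topological_space, 'a::euclidean_space) chart set
   \<Rightarrow> (('m, 'a) chart \<Rightarrow> 'a \<Rightarrow> 'a \<Rightarrow> 'a \<Rightarrow> real) \<Rightarrow> (('m, 'a) chart \<Rightarrow> 'a \<Rightarrow> 'a) \<Rightarrow> bool" where
  "strongly_causal A G T \<longleftrightarrow>
     (\<forall>p U. open U \<and> p \<in> U \<longrightarrow>
        (\<exists>V. open V \<and> p \<in> V \<and> V \<subseteq> U \<and>
           (\<forall>\<gamma> a b. pw_curve A (future_causal G T) \<gamma> a b \<longrightarrow>
                connected {t\<in>{a..b}. \<gamma> t \<in> V})))"

text \<open>A future-directed timelike curve defined on [0,1) (locally piecewise C1).\<close>
definition ftl_curve :: "('m::topological_space, 'a::euclidean_space) chart set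
   \<Rightarrow> (('m, 'a) chart \<Rightarrow> 'a \<Rightarrow> 'a \<Rightarrow> 'a \<Rightarrow> real) \<Rightarrow> (('m, 'a) chart \<Rightarrow> 'a \<Rightarrow> 'a)
   \<Rightarrow> (real \<Rightarrow> 'm) \<Rightarrow> bool" where
  "ftl_curve A G T \<gamma> \<longleftrightarrow> (\<forall>s\<in>{0<..<1}. pw_curve A (future_timelike G T) \<gamma> 0 s)"

text \<open>The chronological relation r: r p q means p \<ll> q.\<close>
definition Ifut :: "('m \<Rightarrow> 'm \<Rightarrow> bool) \<Rightarrow> 'm set \<Rightarrow> 'm set" where
  "Ifut r S = {q. \<exists>s\<in>S. r s q}"

definition Ipast :: "('m \<Rightarrow> 'm \<Rightarrow> bool) \<Rightarrow> 'm set \<Rightarrow> 'm set" where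
  "Ipast r S = {q. \<exists>s\<in>S. r q s}"

definition past_set :: "('m \<Rightarrow> 'm \<Rightarrow> bool) \<Rightarrow> 'm set \<Rightarrow> bool" where
  "past_set r P \<longleftrightarrow> (\<exists>S. P = Ipast r S)"

definition future_set :: "('m \<Rightarrow> 'm \<Rightarrow> bool) \<Rightarrow> 'm set \<Rightarrow> bool" where
  "future_set r P \<longleftrightarrow> (\<exists>S. P = Ifut r S)"

definition IP :: "('m \<Rightarrow> 'm \<Rightarrow> bool) \<Rightarrow> 'm set \<Rightarrow> bool" where
  "IP r P \<longleftrightarrow> P \<noteq> {} \<and> past_set r P \<and>
     \<not> (\<exists>A B. past_set r A \<and> past_set r B \<and> A \<subset> P \<and> B \<subset> P \<and> P = A \<union> B)"

definition IF :: "('m \<Rightarrow> 'm \<Rightarrow> bool) \<Rightarrow> 'm set \<Rightarrow> bool" where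
  "IF r P \<longleftrightarrow> P \<noteq> {} \<and> future_set r P \<and>
     \<not> (\<exists>A B. future_set r A \<and> future_set r B \<and> A \<subset> P \<and> B \<subset> P \<and> P = A \<union> B)"

definition fop :: "('m \<Rightarrow> 'm \<Rightarrow> bool) \<Rightarrow> 'm set \<Rightarrow> 'm set" where
  "fop r P = Ifut r {x. P \<subseteq> Ipast r {x}}"

definition pop :: "('m \<Rightarrow> 'm \<Rightarrow> bool) \<Rightarrow> 'm set \<Rightarrow> 'm set" where
  "pop r P = Ipast r {x. P \<subseteq> Ifut r {x}}"

definition Rpf :: "('m \<Rightarrow> 'm \<Rightarrow> bool) \<Rightarrow> ('m set \<times> 'm set) set" where
  "Rpf r = {(P, Q). IP r P \<and> IF r Q \<and>
      Q \<subseteq> fop r P \<and> (\<forall>R. IF r R \<and> R \<subseteq> fop r P \<and> Q \<subseteq> R \<longrightarrow> R = Q) \<and>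
      P \<subseteq> pop r Q \<and> (\<forall>R. IP r R \<and> R \<subseteq> pop r Q \<and> P \<subseteq> R \<longrightarrow> R = P)}"

definition Mbar :: "('m \<Rightarrow> 'm \<Rightarrow> bool) \<Rightarrow> ('m set \<times> 'm set) set" where
  "Mbar r = Rpf r
     \<union> {(P, Q). P = {} \<and> IF r Q \<and> (\<forall>X. (X, Q) \<notin> Rpf r)}
     \<union> {(P, Q). Q = {} \<and> IP r P \<and> (\<forall>X. (P, X) \<notin> Rpf r)}"

definition Phi :: "('m \<Rightarrow> 'm \<Rightarrow> bool) \<Rightarrow> 'm \<Rightarrow> 'm set \<times> 'm set" where
  "Phi r p = (Ipast r {p}, Ifut r {p})"

definition past_lim :: "('m \<Rightarrow> 'm \<Rightarrow> bool) \<Rightarrow> (nat \<Rightarrow> 'm set) \<Rightarrow> 'm set \<Rightarrow> bool" where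
  "past_lim r Pn Q \<longleftrightarrow>
     (\<forall>x\<in>Q. \<forall>\<^sub>F n in sequentially. x \<in> Pn n) \<and>
     (\<forall>x. \<not> Ipast r {x} \<subseteq> Q \<longrightarrow> (\<forall>\<^sub>F n in sequentially. \<not> Ipast r {x} \<subseteq> Pn n))"

definition future_lim :: "('m \<Rightarrow> 'm \<Rightarrow> bool) \<Rightarrow> (nat \<Rightarrow> 'm set) \<Rightarrow> 'm set \<Rightarrow> bool" where
  "future_lim r Pn Q \<longleftrightarrow>
     (\<forall>x\<in>Q. \<forall>\<^sub>F n in sequentially. x \<in> Pn n) \<and>
     (\<forall>x. \<not> Ifut r {x} \<subseteq> Q \<longrightarrow> (\<forall>\<^sub>F n in sequentially. \<not> Ifut r {x} \<subseteq> Pn n))"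

definition LIF :: "('m \<Rightarrow> 'm \<Rightarrow> bool) \<Rightarrow> ('m set \<times> 'm set) set \<Rightarrow> ('m set \<times> 'm set) set" where
  "LIF r S = {Q \<in> Mbar r. snd Q \<noteq> {} \<and> snd Q \<subseteq> (\<Union>R\<in>S. snd R)}"

definition LIP :: "('m \<Rightarrow> 'm \<Rightarrow> bool) \<Rightarrow> ('m set \<times> 'm set) set \<Rightarrow> ('m set \<times> 'm set) set" where
  "LIP r S = {Q \<in> Mbar r. fst Q \<noteq> {} \<and> fst Q \<subseteq> (\<Union>R\<in>S. fst R)}"

definition ClFB :: "('m \<Rightarrow> 'm \<Rightarrow> bool) \<Rightarrow> ('m set \<times> 'm set) set \<Rightarrow> ('m set \<times> 'm set) set" where
  "ClFB r S = S \<union> {Q \<in> Mbar r. snd Q = {} \<and>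
      (\<exists>R. (\<forall>n. R n \<in> S) \<and> past_lim r (\<lambda>n. fst (R n)) (fst Q))}"

definition ClPB :: "('m \<Rightarrow> 'm \<Rightarrow> bool) \<Rightarrow> ('m set \<times> 'm set) set \<Rightarrow> ('m set \<times> 'm set) set" where
  "ClPB r S = S \<union> {Q \<in> Mbar r. fst Q = {} \<and>
      (\<exists>R. (\<forall>n. R n \<in> S) \<and> future_lim r (\<lambda>n. snd (R n)) (snd Q))}"

definition Lplus :: "('m \<Rightarrow> 'm \<Rightarrow> bool) \<Rightarrow> ('m set \<times> 'm set) set \<Rightarrow> ('m set \<times> 'm set) set" where
  "Lplus r S = ClFB r (S \<union> LIF r S)"

definition Lminus :: "('m \<Rightarrow> 'm \<Rightarrow> bool) \<Rightarrow> ('m set \<times> 'm set) set \<Rightarrow> ('m set \<times> 'm set) set" where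
  "Lminus r S = ClPB r (S \<union> LIP r S)"

definition Tbar :: "('m \<Rightarrow> 'm \<Rightarrow> bool) \<Rightarrow> ('m set \<times> 'm set) topology" where
  "Tbar r = topology_generated_by
     ({Mbar r - Lplus r S | S. S \<subseteq> Mbar r} \<union> {Mbar r - Lminus r S | S. S \<subseteq> Mbar r})"

definition T0_separated :: "'x topology \<Rightarrow> 'x \<Rightarrow> 'x \<Rightarrow> bool" where
  "T0_separated X a b \<longleftrightarrow> (\<exists>U. openin X U \<and> ((a \<in> U \<and> b \<notin> U) \<or> (b \<in> U \<and> a \<notin> U)))"

definition T1_separated :: "'x topology \<Rightarrow> 'x \<Rightarrow> 'x \<Rightarrow> bool" where
  "T1_separated X a b \<longleftrightarrow> (\<exists>U. openin X U \<and> a \<in> U \<and> b \<notin> U) \<and> (\<exists>V. openin X V \<and> b \<in> V \<and> a \<notin> V)"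

end

theory Submission
  imports Defs
begin

(*
  Every separation is witnessed by a subbasic open set Mbar - L\<^sup>+({b}) or Mbar - L\<^sup>-({b}).
  A point lies outside L\<^sup>+({b}) as soon as its IF is nonempty and not contained in that of b,
  since the closure ClFB only adds points with empty IF; dually for L\<^sup>-. Two elements of R_pf
  with P \<subseteq> Q and P\<^sup>\<star> \<subseteq> Q\<^sup>\<star> have P\<^sup>\<star> = Q\<^sup>\<star>, because f(Q) \<subseteq> f(P) and P\<^sup>\<star> is maximal in f(P).
  A future boundary point (P, {}) with P \<subset> Q is not added to L\<^sup>+({(Q, {})}), as the constant
  sequence Q converges only to past-sets containing Q.

  For the curve \<gamma> with I\<^sup>-[\<gamma>] = P: if Q \<subseteq> P fails, L\<^sup>-(\<Phi>[\<gamma>]) contains the curve but not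
  (Q, Q\<^sup>\<star>). If Q \<subset> P, some tail of \<gamma> has futures not covering Q\<^sup>\<star>: otherwise, the points of \<gamma>
  being chronologically ordered, P would lie in p(Q\<^sup>\<star>), and maximality of Q in p(Q\<^sup>\<star>) would give
  P = Q. Then L\<^sup>+ of that tail contains the tail but not (Q, Q\<^sup>\<star>).
*)

section \<open>Separation in the topology on Mbar\<close>

lemma subset_Lplus: "S \<subseteq> Lplus r S"
  unfolding Lplus_def ClFB_def by auto

lemma subset_Lminus: "S \<subseteq> Lminus r S"
  unfolding Lminus_def ClPB_def by auto

lemma openin_Tbar_Lplus: "S \<subseteq> Mbar r \<Longrightarrow> openin (Tbar r) (Mbar r - Lplus r S)"
  unfolding Tbar_def by (rule topology_generated_by_Basis) blast

lemma openin_Tbar_Lminus: "S \<subseteq> Mbar r \<Longrightarrow> openin (Tbar r) (Mbar r - Lminus r S)"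
  unfolding Tbar_def by (rule topology_generated_by_Basis) blast

lemma notin_Lplus: "snd a \<noteq> {} \<Longrightarrow> \<not> snd a \<subseteq> (\<Union>R\<in>S. snd R) \<Longrightarrow> a \<notin> Lplus r S"
  unfolding Lplus_def ClFB_def LIF_def by auto

lemma notin_Lminus: "fst a \<noteq> {} \<Longrightarrow> \<not> fst a \<subseteq> (\<Union>R\<in>S. fst R) \<Longrightarrow> a \<notin> Lminus r S"
  unfolding Lminus_def ClPB_def LIP_def by auto

lemma past_lim_const_subset:
  assumes "past_set r Q" and "past_lim r (\<lambda>n. Q) P"
  shows "Q \<subseteq> P"
proof
  fix q assume "q \<in> Q"
  with \<open>past_set r Q\<close> obtain s where s: "r q s" "Ipast r {s} \<subseteq> Q"
    unfolding past_set_def Ipast_def by blast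
  show "q \<in> P"
  proof (rule ccontr)
    assume "q \<notin> P"
    with s have "\<not> Ipast r {s} \<subseteq> P"
      unfolding Ipast_def by blast
    with \<open>past_lim r (\<lambda>n. Q) P\<close> have "\<not> Ipast r {s} \<subseteq> Q"
      unfolding past_lim_def by auto
    with s show False by blast
  qed
qed

lemma notin_Lplus_future_boundary:
  assumes "past_set r Q" and "\<not> Q \<subseteq> P"
  shows "(P, {}) \<notin> Lplus r {(Q, {})}"
proof
  assume "(P, {}) \<in> Lplus r {(Q, {})}"
  moreover have "LIF r {(Q, {})} = {}"
    unfolding LIF_def by auto
  ultimately have "P = Q \<or> past_lim r (\<lambda>n. Q) P"
    unfolding Lplus_def ClFB_def by auto
  then show False
    using past_lim_const_subset[OF \<open>past_set r Q\<close>] \<open>\<not> Q \<subseteq> P\<close> by blast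
qed

lemma open_separating_if_notin_Lplus:
  assumes "a \<in> Mbar r" "b \<in> Mbar r" "a \<notin> Lplus r {b}"
  shows "\<exists>U. openin (Tbar r) U \<and> a \<in> U \<and> b \<notin> U"
  using assms openin_Tbar_Lplus[of "{b}" r] subset_Lplus[of "{b}" r] by blast

lemma open_separating_if_notin_Lminus:
  assumes "a \<in> Mbar r" "b \<in> Mbar r" "a \<notin> Lminus r {b}"
  shows "\<exists>U. openin (Tbar r) U \<and> a \<in> U \<and> b \<notin> U"
  using assms openin_Tbar_Lminus[of "{b}" r] subset_Lminus[of "{b}" r] by blast

lemma Rpf_subset_Mbar: "Rpf r \<subseteq> Mbar r"
  unfolding Mbar_def by blast

lemma Rpf_if_Mbar: "(P, Ps) \<in> Mbar r \<Longrightarrow> P \<noteq> {} \<Longrightarrow> Ps \<noteq> {} \<Longrightarrow> (P, Ps) \<in> Rpf r"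
  unfolding Mbar_def by auto

lemma IP_if_Mbar: "(P, {}) \<in> Mbar r \<Longrightarrow> IP r P"
  unfolding Mbar_def Rpf_def IF_def by auto

lemma IF_if_Mbar: "({}, Ps) \<in> Mbar r \<Longrightarrow> IF r Ps"
  unfolding Mbar_def Rpf_def IP_def by auto

lemma Rpf_nonempty: "(P, Ps) \<in> Rpf r \<Longrightarrow> P \<noteq> {} \<and> Ps \<noteq> {}"
  unfolding Rpf_def IP_def IF_def by auto

lemma Rpf_le_imp_snd_eq:
  assumes P: "(P, Ps) \<in> Rpf r" and Q: "(Q, Qs) \<in> Rpf r" and le: "P \<subseteq> Q" "Ps \<subseteq> Qs"
  shows "Ps = Qs"
proof -
  have "fop r Q \<subseteq> fop r P"
    using le unfolding fop_def Ifut_def by auto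
  then have "IF r Qs \<and> Qs \<subseteq> fop r P"
    using Q unfolding Rpf_def by auto
  then show ?thesis
    using P le unfolding Rpf_def by auto
qed

lemma Rpf_open_separating:
  assumes P: "(P, Ps) \<in> Rpf r" and Q: "(Q, Qs) \<in> Rpf r" and "Ps \<noteq> Qs"
  shows "\<exists>U. openin (Tbar r) U \<and> (P, Ps) \<in> U \<and> (Q, Qs) \<notin> U"
proof (cases "Ps \<subseteq> Qs")
  case False
  then have "(P, Ps) \<notin> Lplus r {(Q, Qs)}"
    using Rpf_nonempty[OF P] by (intro notin_Lplus) auto
  then show ?thesis
    using P Q Rpf_subset_Mbar by (blast intro: open_separating_if_notin_Lplus)
next
  case True
  then have "\<not> P \<subseteq> Q"
    using Rpf_le_imp_snd_eq[OF P Q] \<open>Ps \<noteq> Qs\<close> by blast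
  then have "(P, Ps) \<notin> Lminus r {(Q, Qs)}"
    using Rpf_nonempty[OF P] by (intro notin_Lminus) auto
  then show ?thesis
    using P Q Rpf_subset_Mbar by (blast intro: open_separating_if_notin_Lminus)
qed

lemma Rpf_T1_separated:
  "(P, Ps) \<in> Rpf r \<Longrightarrow> (Q, Qs) \<in> Rpf r \<Longrightarrow> Ps \<noteq> Qs \<Longrightarrow> T1_separated (Tbar r) (P, Ps) (Q, Qs)"
  unfolding T1_separated_def by (metis Rpf_open_separating)

lemma T0_separated_future_boundary:
  assumes "(P, Ps) \<in> Mbar r" "(Q, {}) \<in> Mbar r" "Ps \<noteq> {}"
  shows "T0_separated (Tbar r) (P, Ps) (Q, {})"
proof -
  have "(P, Ps) \<notin> Lplus r {(Q, {})}"
    using \<open>Ps \<noteq> {}\<close> by (intro notin_Lplus) auto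
  then show ?thesis
    unfolding T0_separated_def using assms open_separating_if_notin_Lplus by blast
qed

lemma future_boundary_open_separating:
  assumes P: "(P, {}) \<in> Mbar r" and Q: "(Q, {}) \<in> Mbar r" and "P \<noteq> Q"
  shows "\<exists>U. openin (Tbar r) U \<and> (P, {}) \<in> U \<and> (Q, {}) \<notin> U"
proof (cases "P \<subseteq> Q")
  case True
  with \<open>P \<noteq> Q\<close> have "(P, {}) \<notin> Lplus r {(Q, {})}"
    using IP_if_Mbar[OF Q] unfolding IP_def by (intro notin_Lplus_future_boundary) auto
  then show ?thesis
    by (rule open_separating_if_notin_Lplus[OF P Q])
next
  case False
  then have "(P, {}) \<notin> Lminus r {(Q, {})}"
    using IP_if_Mbar[OF P] unfolding IP_def by (intro notin_Lminus) auto
  then show ?thesis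
    by (rule open_separating_if_notin_Lminus[OF P Q])
qed

lemma T1_separated_future_boundary:
  assumes "(P, {}) \<in> Mbar r" "(Q, {}) \<in> Mbar r" "P \<noteq> Q"
  shows "T1_separated (Tbar r) (P, {}) (Q, {})"
  unfolding T1_separated_def
  using future_boundary_open_separating[OF assms]
    future_boundary_open_separating[OF assms(2,1) not_sym[OF assms(3)]]
  by (rule conjI)

lemma T1_separated_future_past_boundary:
  assumes P: "(P, {}) \<in> Mbar r" and Q: "({}, Qs) \<in> Mbar r"
  shows "T1_separated (Tbar r) (P, {}) ({}, Qs)"
proof -
  have "(P, {}) \<notin> Lminus r {({}, Qs)}"
    using IP_if_Mbar[OF P] unfolding IP_def by (intro notin_Lminus) auto
  moreover have "({}, Qs) \<notin> Lplus r {(P, {})}"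
    using IF_if_Mbar[OF Q] unfolding IF_def by (intro notin_Lplus) auto
  ultimately show ?thesis
    unfolding T1_separated_def
    by (intro conjI open_separating_if_notin_Lminus[OF P Q] open_separating_if_notin_Lplus[OF Q P])
qed

section \<open>Piecewise smooth timelike curves\<close>

lemma C1_piece_reparam:
  assumes C: "C1_piece A good \<gamma> s s'"
    and \<alpha>: "\<alpha> > 0" and bounds: "s \<le> \<alpha> * \<sigma> + \<beta>" "\<alpha> * \<sigma>' + \<beta> \<le> s'"
    and \<eta>: "\<And>u. u \<in> {\<sigma>..\<sigma>'} \<Longrightarrow> \<eta> u = \<gamma> (\<alpha> * u + \<beta>)"
    and good_scale: "\<And>c x v. c \<in> A \<Longrightarrow> x \<in> snd c ` fst c \<Longrightarrow> good c x v \<Longrightarrow> good c x (\<alpha> *\<^sub>R v)"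
  shows "C1_piece A good \<eta> \<sigma> \<sigma>'"
proof -
  define \<phi> where "\<phi> u = \<alpha> * u + \<beta>" for u
  from C obtain \<gamma>' where \<gamma>': "\<forall>c\<in>A.
        continuous_on {t\<in>{s..s'}. \<gamma> t \<in> fst c} (\<gamma>' c) \<and>
        (\<forall>t\<in>{s..s'}. \<gamma> t \<in> fst c \<longrightarrow>
           ((snd c \<circ> \<gamma>) has_vector_derivative \<gamma>' c t) (at t within {s..s'}) \<and>
           good c (snd c (\<gamma> t)) (\<gamma>' c t))"
    unfolding C1_piece_def by blast
  have \<phi>_maps: "\<phi> u \<in> {s..s'}" if "u \<in> {\<sigma>..\<sigma>'}" for u
  proof -
    have "\<alpha> * \<sigma> \<le> \<alpha> * u" "\<alpha> * u \<le> \<alpha> * \<sigma>'" using that \<alpha> by simp_all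
    then show ?thesis using bounds by (simp add: \<phi>_def)
  qed
  have \<phi>_cont: "continuous_on X \<phi>" for X
    unfolding \<phi>_def by (intro continuous_intros)
  have \<eta>_\<phi>: "\<eta> u = \<gamma> (\<phi> u)" if "u \<in> {\<sigma>..\<sigma>'}" for u
    using \<eta>[OF that] by (simp add: \<phi>_def)
  have "continuous_on {\<sigma>..\<sigma>'} (\<lambda>u. \<gamma> (\<phi> u))"
    using C \<phi>_maps unfolding C1_piece_def by (intro continuous_on_compose2[OF _ \<phi>_cont]) blast+
  then have \<eta>_cont: "continuous_on {\<sigma>..\<sigma>'} \<eta>"
    by (rule continuous_on_cong[THEN iffD1, rotated 2]) (simp_all add: \<eta>_\<phi>)
  have "continuous_on {u\<in>{\<sigma>..\<sigma>'}. \<eta> u \<in> fst c} (\<lambda>u. \<alpha> *\<^sub>R \<gamma>' c (\<phi> u))" if c: "c \<in> A" for c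
  proof -
    have "continuous_on {u\<in>{\<sigma>..\<sigma>'}. \<eta> u \<in> fst c} (\<lambda>u. \<gamma>' c (\<phi> u))"
      using \<gamma>' c \<phi>_maps \<eta>_\<phi> by (intro continuous_on_compose2[OF _ \<phi>_cont]) fastforce+
    then show ?thesis by (intro continuous_intros)
  qed
  moreover have "((snd c \<circ> \<eta>) has_vector_derivative \<alpha> *\<^sub>R \<gamma>' c (\<phi> u)) (at u within {\<sigma>..\<sigma>'})
      \<and> good c (snd c (\<eta> u)) (\<alpha> *\<^sub>R \<gamma>' c (\<phi> u))"
    if c: "c \<in> A" and u: "u \<in> {\<sigma>..\<sigma>'}" "\<eta> u \<in> fst c" for c u
  proof
    have \<phi>u: "\<phi> u \<in> {s..s'}" "\<gamma> (\<phi> u) \<in> fst c" using \<phi>_maps u \<eta>_\<phi> by auto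
    have "(\<phi> has_vector_derivative \<alpha>) (at u within {\<sigma>..\<sigma>'})"
      unfolding \<phi>_def by (auto intro!: derivative_eq_intros)
    moreover have "((snd c \<circ> \<gamma>) has_vector_derivative \<gamma>' c (\<phi> u)) (at (\<phi> u) within \<phi> ` {\<sigma>..\<sigma>'})"
      using \<gamma>' c \<phi>u \<phi>_maps by (blast intro: has_vector_derivative_within_subset)
    ultimately have "((snd c \<circ> \<gamma> \<circ> \<phi>) has_vector_derivative \<alpha> *\<^sub>R \<gamma>' c (\<phi> u)) (at u within {\<sigma>..\<sigma>'})"
      by (rule vector_diff_chain_within)
    then show "((snd c \<circ> \<eta>) has_vector_derivative \<alpha> *\<^sub>R \<gamma>' c (\<phi> u)) (at u within {\<sigma>..\<sigma>'})"
      by (rule has_vector_derivative_transform[OF u(1), rotated]) (simp add: \<eta>_\<phi>)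
    have "good c (snd c (\<gamma> (\<phi> u))) (\<gamma>' c (\<phi> u))" using \<gamma>' c \<phi>u by blast
    then show "good c (snd c (\<eta> u)) (\<alpha> *\<^sub>R \<gamma>' c (\<phi> u))"
      using good_scale c \<phi>u u \<eta>_\<phi> by auto
  qed
  ultimately show ?thesis
    unfolding C1_piece_def using \<eta>_cont
    by (intro conjI exI[of _ "\<lambda>c u. \<alpha> *\<^sub>R \<gamma>' c (\<phi> u)"]) auto
qed

lemma C1_piece_on_gap:
  fixes K :: "real set"
  assumes K: "finite K" "l \<in> K" "u \<in> K"
    and pieces: "\<forall>k\<in>K. \<forall>k'\<in>K. k < k' \<and> {k<..<k'} \<inter> K = {} \<longrightarrow> C1_piece A good \<gamma> k k'"
    and gap: "l \<le> s" "s < s'" "s' \<le> u" "{s<..<s'} \<inter> K = {}"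
  shows "C1_piece A good \<gamma> s s'"
proof -
  define l' where "l' = Max {k\<in>K. k \<le> s}"
  define u' where "u' = Min {k\<in>K. s' \<le> k}"
  have "l' \<in> {k\<in>K. k \<le> s}" "u' \<in> {k\<in>K. s' \<le> k}"
    unfolding l'_def u'_def using K gap by (intro Max_in Min_in; force)+
  moreover have "k \<le> l'" if "k \<in> K" "k \<le> s" for k
    unfolding l'_def using K that by (intro Max_ge) auto
  moreover have "u' \<le> k" if "k \<in> K" "s' \<le> k" for k
    unfolding u'_def using K that by (intro Min_le) auto
  ultimately have l': "l' \<in> K" "l' \<le> s" "\<And>k. k \<in> K \<Longrightarrow> k \<le> s \<Longrightarrow> k \<le> l'"
    and u': "u' \<in> K" "s' \<le> u'" "\<And>k. k \<in> K \<Longrightarrow> s' \<le> k \<Longrightarrow> u' \<le> k"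
    by auto
  have "{l'<..<u'} \<inter> K = {}"
  proof (rule ccontr)
    assume "{l'<..<u'} \<inter> K \<noteq> {}"
    then obtain k where "k \<in> K" "l' < k" "k < u'" by auto
    then show False using l'(3) u'(3) gap(4) by force
  qed
  then have "C1_piece A good \<gamma> l' u'"
    using pieces l' u' gap by force
  then show ?thesis
    by (rule C1_piece_reparam[where \<alpha>=1 and \<beta>=0]) (use l' u' in auto)
qed

lemma pw_curve_reparam:
  assumes C: "pw_curve A good \<gamma> a b"
    and \<alpha>: "\<alpha> > 0" and ends: "a = \<alpha> * a' + \<beta>" "b = \<alpha> * b' + \<beta>"
    and \<eta>: "\<And>u. u \<in> {a'..b'} \<Longrightarrow> \<eta> u = \<gamma> (\<alpha> * u + \<beta>)"
    and good_scale: "\<And>c x v. c \<in> A \<Longrightarrow> x \<in> snd c ` fst c \<Longrightarrow> good c x v \<Longrightarrow> good c x (\<alpha> *\<^sub>R v)"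
  shows "pw_curve A good \<eta> a' b'"
proof -
  from C obtain K where K: "a < b" "finite K" "a \<in> K" "b \<in> K" "K \<subseteq> {a..b}"
    and pieces: "\<forall>s\<in>K. \<forall>s'\<in>K. s < s' \<and> {s<..<s'} \<inter> K = {} \<longrightarrow> C1_piece A good \<gamma> s s'"
    unfolding pw_curve_def by blast
  define \<psi> where "\<psi> t = (t - \<beta>) / \<alpha>" for t
  have \<psi>_inv: "\<alpha> * \<psi> t + \<beta> = t" for t
    using \<alpha> by (simp add: \<psi>_def)
  have \<psi>_less: "\<psi> t < \<psi> t' \<longleftrightarrow> t < t'" for t t'
    using \<alpha> by (simp add: \<psi>_def divide_less_cancel)
  then have \<psi>_le: "\<psi> t \<le> \<psi> t' \<longleftrightarrow> t \<le> t'" for t t'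
    by (meson not_less)
  have \<psi>_ends: "\<psi> a = a'" "\<psi> b = b'"
    using \<alpha> ends by (simp_all add: \<psi>_def)
  define K' where "K' = \<psi> ` K"
  have "C1_piece A good \<eta> s s'"
    if gap: "s \<in> K'" "s' \<in> K'" "s < s'" "{s<..<s'} \<inter> K' = {}" for s s'
  proof -
    obtain k k' where k: "k \<in> K" "k' \<in> K" "s = \<psi> k" "s' = \<psi> k'"
      using gap(1,2) unfolding K'_def by blast
    have "{k<..<k'} \<inter> K = {}"
    proof (rule ccontr)
      assume "{k<..<k'} \<inter> K \<noteq> {}"
      then obtain j where "j \<in> K" "k < j" "j < k'" by auto
      then have "\<psi> j \<in> {s<..<s'} \<inter> K'" by (simp add: k \<psi>_less K'_def)
      then show False using gap(4) by blast
    qed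
    moreover have "k < k'"
      using gap(3) k \<psi>_less by simp
    ultimately have \<gamma>_piece: "C1_piece A good \<gamma> k k'"
      using pieces k by blast
    have "a \<le> k" "k' \<le> b"
      using K(5) k by auto
    then have "\<psi> a \<le> \<psi> k" "\<psi> k' \<le> \<psi> b"
      using \<psi>_le by blast+
    then have "{s..s'} \<subseteq> {a'..b'}"
      using k \<psi>_ends by auto
    then have \<eta>_on_gap: "\<eta> u = \<gamma> (\<alpha> * u + \<beta>)" if "u \<in> {s..s'}" for u
      using \<eta> that by blast
    show ?thesis
      by (rule C1_piece_reparam[OF \<gamma>_piece \<alpha> _ _ \<eta>_on_gap good_scale]) (simp_all add: k \<psi>_inv)
  qed
  moreover have "a' < b'" "finite K'" "a' \<in> K'" "b' \<in> K'" "K' \<subseteq> {a'..b'}"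
    using K \<psi>_less \<psi>_le by (auto simp: K'_def simp flip: \<psi>_ends)
  ultimately show ?thesis
    unfolding pw_curve_def by blast
qed

lemma pw_curve_restrict:
  assumes C: "pw_curve A good \<gamma> a b" and cd: "a \<le> c" "c < d" "d \<le> b"
  shows "pw_curve A good \<gamma> c d"
proof -
  from C obtain K where K: "finite K" "a \<in> K" "b \<in> K"
    and pieces: "\<forall>s\<in>K. \<forall>s'\<in>K. s < s' \<and> {s<..<s'} \<inter> K = {} \<longrightarrow> C1_piece A good \<gamma> s s'"
    unfolding pw_curve_def by blast
  define K' where "K' = K \<inter> {c..d} \<union> {c, d}"
  have "C1_piece A good \<gamma> s s'"
    if "s \<in> K'" "s' \<in> K'" "s < s'" "{s<..<s'} \<inter> K' = {}" for s s'
  proof (rule C1_piece_on_gap[OF K pieces])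
    show "a \<le> s" "s < s'" "s' \<le> b" using that cd by (auto simp: K'_def)
    show "{s<..<s'} \<inter> K = {}" using that cd by (auto simp: K'_def)
  qed
  moreover have "finite K'" "c \<in> K'" "d \<in> K'" "K' \<subseteq> {c..d}"
    using K cd by (auto simp: K'_def)
  ultimately show ?thesis
    unfolding pw_curve_def using cd by blast
qed

lemma pw_curve_join:
  assumes C1: "pw_curve A good \<gamma> a b" and C2: "pw_curve A good \<gamma> b c"
  shows "pw_curve A good \<gamma> a c"
proof -
  from C1 obtain K1 where K1: "a < b" "finite K1" "a \<in> K1" "b \<in> K1" "K1 \<subseteq> {a..b}"
    and pieces1: "\<forall>s\<in>K1. \<forall>s'\<in>K1. s < s' \<and> {s<..<s'} \<inter> K1 = {} \<longrightarrow> C1_piece A good \<gamma> s s'"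
    unfolding pw_curve_def by blast
  from C2 obtain K2 where K2: "b < c" "finite K2" "b \<in> K2" "c \<in> K2" "K2 \<subseteq> {b..c}"
    and pieces2: "\<forall>s\<in>K2. \<forall>s'\<in>K2. s < s' \<and> {s<..<s'} \<inter> K2 = {} \<longrightarrow> C1_piece A good \<gamma> s s'"
    unfolding pw_curve_def by blast
  have "C1_piece A good \<gamma> s s'"
    if gap: "s \<in> K1 \<union> K2" "s' \<in> K1 \<union> K2" "s < s'" "{s<..<s'} \<inter> (K1 \<union> K2) = {}" for s s'
  proof (cases "s' \<le> b")
    case True
    then show ?thesis
      using gap K1 K2 by (intro C1_piece_on_gap[OF K1(2-4) pieces1]) auto
  next
    case False
    then have "b \<le> s" using gap K1 by force
    then show ?thesis
      using gap K1 K2 by (intro C1_piece_on_gap[OF K2(2-4) pieces2]) auto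
  qed
  moreover have "a < c" "finite (K1 \<union> K2)" "a \<in> K1 \<union> K2" "c \<in> K1 \<union> K2" "K1 \<union> K2 \<subseteq> {a..c}"
    using K1 K2 by auto
  ultimately show ?thesis
    unfolding pw_curve_def by blast
qed

lemma future_timelike_scaleR:
  assumes st: "spacetime A G T" and c: "c \<in> A" "x \<in> snd c ` fst c" and k: "k > 0"
    and v: "future_timelike G T c x v"
  shows "future_timelike G T c x (k *\<^sub>R v)"
proof -
  have "bilinear (G c x)"
    using st c unfolding spacetime_def lorentzian_form_def by blast
  then have "G c x (k *\<^sub>R v) (k *\<^sub>R v) = k * (k * G c x v v)"
    and "G c x (k *\<^sub>R v) (T c x) = k * G c x v (T c x)"
    by (simp_all add: bilinear_lmul bilinear_rmul)
  then show ?thesis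
    using v k by (simp add: future_timelike_def mult_pos_neg)
qed

lemma transp_chron:
  assumes st: "spacetime A G T"
  shows "transp (chron A G T)"
proof (rule transpI)
  fix p q r assume "chron A G T p q" "chron A G T q r"
  obtain \<gamma> where \<gamma>: "pw_curve A (future_timelike G T) \<gamma> 0 1" "\<gamma> 0 = p" "\<gamma> 1 = q"
    using \<open>chron A G T p q\<close> unfolding chron_def by blast
  obtain \<delta> where \<delta>: "pw_curve A (future_timelike G T) \<delta> 0 1" "\<delta> 0 = q" "\<delta> 1 = r"
    using \<open>chron A G T q r\<close> unfolding chron_def by blast
  define \<eta> where "\<eta> s = (if s \<le> 1 then \<gamma> s else \<delta> (s - 1))" for s
  have "pw_curve A (future_timelike G T) \<eta> 0 1"
    by (rule pw_curve_reparam[OF \<gamma>(1), where \<alpha>=1 and \<beta>=0]) (simp_all add: \<eta>_def)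
  moreover have "pw_curve A (future_timelike G T) \<eta> 1 2"
    by (rule pw_curve_reparam[OF \<delta>(1), where \<alpha>=1 and \<beta>="-1"]) (auto simp: \<eta>_def \<gamma> \<delta>)
  ultimately have "pw_curve A (future_timelike G T) \<eta> 0 2"
    by (rule pw_curve_join)
  then have "pw_curve A (future_timelike G T) (\<lambda>u. \<eta> (2 * u)) 0 1"
    by (rule pw_curve_reparam[where \<alpha>=2 and \<beta>=0]) (simp_all add: future_timelike_scaleR[OF st])
  moreover have "\<eta> (2 * 0) = p" "\<eta> (2 * 1) = r"
    using \<gamma> \<delta> by (simp_all add: \<eta>_def)
  ultimately show "chron A G T p r"
    unfolding chron_def by blast
qed

lemma ftl_curve_monotone_chron:
  assumes st: "spacetime A G T" and \<gamma>: "ftl_curve A G T \<gamma>"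
  shows "monotone_on {0..<1} (<) (chron A G T) \<gamma>"
proof (rule monotone_onI)
  fix t t' :: real assume "t \<in> {0..<1}" "t' \<in> {0..<1}" "t < t'"
  then have t: "0 \<le> t" "t < t'" "t' < 1" by auto
  have "pw_curve A (future_timelike G T) \<gamma> 0 t'"
    using \<gamma> t unfolding ftl_curve_def by auto
  then have "pw_curve A (future_timelike G T) \<gamma> t t'"
    by (rule pw_curve_restrict) (use t in auto)
  then have "pw_curve A (future_timelike G T) (\<lambda>u. \<gamma> ((t' - t) * u + t)) 0 1"
    by (rule pw_curve_reparam) (use t future_timelike_scaleR[OF st] in auto)
  then show "chron A G T (\<gamma> t) (\<gamma> t')"
    unfolding chron_def by fastforce
qed

section \<open>Future endpoints of chronological chains\<close>

definition future_endpoint :: "('m \<Rightarrow> 'm \<Rightarrow> bool) \<Rightarrow> (real \<Rightarrow> 'm) \<Rightarrow> 'm set \<times> 'm set \<Rightarrow> bool" where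
  "future_endpoint r \<gamma> q \<longleftrightarrow>
     (\<forall>N. openin (Tbar r) N \<and> q \<in> N \<longrightarrow> (\<exists>t\<in>{0..<1}. Phi r ` \<gamma> ` {t..<1} \<subseteq> N))"

lemma not_future_endpoint_if_tail_in:
  assumes "openin (Tbar r) (Mbar r - L)" "q \<in> Mbar r" "q \<notin> L"
    and "t\<^sub>0 \<in> {0..<1}" "Phi r ` \<gamma> ` {t\<^sub>0..<1} \<inter> Mbar r \<subseteq> L"
  shows "\<not> future_endpoint r \<gamma> q"
proof
  assume "future_endpoint r \<gamma> q"
  then obtain t where t: "t \<in> {0..<1}" "Phi r ` \<gamma> ` {t..<1} \<subseteq> Mbar r - L"
    using assms(1-3) unfolding future_endpoint_def by blast
  have "max t t\<^sub>0 \<in> {t..<1} \<inter> {t\<^sub>0..<1}"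
    using t(1) assms(4) by auto
  then show False
    using t(2) assms(5) by blast
qed

lemma chain_past_subset_pop:
  fixes \<gamma> :: "real \<Rightarrow> 'm"
  assumes "transp r" and chain: "monotone_on {0..<1} (<) r \<gamma>"
    and tails: "\<And>t\<^sub>0. t\<^sub>0 \<in> {0..<1} \<Longrightarrow> Qs \<subseteq> (\<Union>t\<in>{t\<^sub>0..<1}. Ifut r {\<gamma> t})"
  shows "(\<Union>t\<in>{0..<1}. Ipast r {\<gamma> t}) \<subseteq> pop r Qs"
proof
  fix z assume "z \<in> (\<Union>t\<in>{0..<1}. Ipast r {\<gamma> t})"
  then obtain t where t: "t \<in> {0..<1}" "r z (\<gamma> t)"
    unfolding Ipast_def by blast
  have "r (\<gamma> t) y" if "y \<in> Qs" for y
  proof -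
    obtain t' where t': "t' \<in> {t..<1}" "r (\<gamma> t') y"
      using tails[OF t(1)] \<open>y \<in> Qs\<close> unfolding Ifut_def by blast
    show ?thesis
    proof (cases "t = t'")
      case False
      then have "r (\<gamma> t) (\<gamma> t')"
        by (intro monotone_onD[OF chain]) (use t(1) t'(1) in auto)
      with t'(2) show ?thesis
        using \<open>transp r\<close> by (blast dest: transpD)
    qed (use t' in simp)
  qed
  then show "z \<in> pop r Qs"
    using t(2) unfolding pop_def Ipast_def Ifut_def by blast
qed

lemma not_future_endpoint_of_chain:
  fixes \<gamma> :: "real \<Rightarrow> 'm"
  assumes "transp r" and chain: "monotone_on {0..<1} (<) r \<gamma>"
    and P: "IP r P" "P = (\<Union>t\<in>{0..<1}. Ipast r {\<gamma> t})"
    and Q: "(Q, Qs) \<in> Rpf r" and "P \<noteq> Q"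
  shows "\<not> future_endpoint r \<gamma> (Q, Qs)"
proof (cases "Q \<subseteq> P")
  case False
  define S where "S = Phi r ` \<gamma> ` {0..<1} \<inter> Mbar r"
  have "(\<Union>R\<in>S. fst R) \<subseteq> P"
    unfolding S_def P(2) Phi_def by auto
  then have "(Q, Qs) \<notin> Lminus r S"
    using False Rpf_nonempty[OF Q] by (intro notin_Lminus) auto
  moreover have "openin (Tbar r) (Mbar r - Lminus r S)"
    by (rule openin_Tbar_Lminus) (simp add: S_def)
  ultimately show ?thesis
    using Q Rpf_subset_Mbar subset_Lminus[of S r]
    by (intro not_future_endpoint_if_tail_in[where t\<^sub>0=0]) (auto simp: S_def)
next
  case True
  have "\<exists>t\<^sub>0\<in>{0..<1}. \<not> Qs \<subseteq> (\<Union>t\<in>{t\<^sub>0..<1}. Ifut r {\<gamma> t})"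
  proof (rule ccontr)
    assume "\<not> ?thesis"
    then have "P \<subseteq> pop r Qs"
      unfolding P(2) by (intro chain_past_subset_pop[OF \<open>transp r\<close> chain]) auto
    then show False
      using Q P(1) True \<open>P \<noteq> Q\<close> unfolding Rpf_def by auto
  qed
  then obtain t\<^sub>0 where t\<^sub>0: "t\<^sub>0 \<in> {0..<1}" "\<not> Qs \<subseteq> (\<Union>t\<in>{t\<^sub>0..<1}. Ifut r {\<gamma> t})"
    by blast
  define S where "S = Phi r ` \<gamma> ` {t\<^sub>0..<1} \<inter> Mbar r"
  have "(\<Union>R\<in>S. snd R) \<subseteq> (\<Union>t\<in>{t\<^sub>0..<1}. Ifut r {\<gamma> t})"
    unfolding S_def Phi_def by auto
  then have "(Q, Qs) \<notin> Lplus r S"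
    using t\<^sub>0(2) Rpf_nonempty[OF Q] by (intro notin_Lplus) auto
  moreover have "openin (Tbar r) (Mbar r - Lplus r S)"
    by (rule openin_Tbar_Lplus) (simp add: S_def)
  ultimately show ?thesis
    using Q Rpf_subset_Mbar subset_Lplus[of S r] t\<^sub>0(1)
    by (intro not_future_endpoint_if_tail_in) (auto simp: S_def)
qed

theorem theorem12:
  fixes A :: "('m::{t2_space, second_countable_topology}, 'a::euclidean_space) chart set"
    and G :: "('m, 'a) chart \<Rightarrow> 'a \<Rightarrow> 'a \<Rightarrow> 'a \<Rightarrow> real"
    and T :: "('m, 'a) chart \<Rightarrow> 'a \<Rightarrow> 'a"
    and P Ps Q Qs :: "'m set"
  assumes st: "spacetime A G T"
    and sc: "strongly_causal A G T"
    and Pbar: "(P, Ps) \<in> Mbar (chron A G T)"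
    and Qbar: "(Q, Qs) \<in> Mbar (chron A G T)"
    and neq: "(P, Ps) \<noteq> (Q, Qs)"
  shows
    "(P \<noteq> {} \<and> Ps \<noteq> {} \<and> Q \<noteq> {} \<and> Qs \<noteq> {} \<and> P \<noteq> Q \<and> Ps \<noteq> Qs \<longrightarrow>
        T1_separated (Tbar (chron A G T)) (P, Ps) (Q, Qs) \<and>
        (\<forall>\<gamma>. ftl_curve A G T \<gamma> \<and> (\<Union>t\<in>{0..<1}. Ipast (chron A G T) {\<gamma> t}) = P \<longrightarrow>
           \<not> (\<forall>N. openin (Tbar (chron A G T)) N \<and> (Q, Qs) \<in> N \<longrightarrow>
                 (\<exists>t\<in>{0..<1}. Phi (chron A G T) ` \<gamma> ` {t..<1} \<subseteq> N))))
     \<and> (P \<noteq> {} \<and> Ps \<noteq> {} \<and> Qs = {} \<longrightarrow> T0_separated (Tbar (chron A G T)) (P, Ps) (Q, Qs))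
     \<and> (Ps = {} \<and> Qs = {} \<longrightarrow> T1_separated (Tbar (chron A G T)) (P, Ps) (Q, Qs))
     \<and> (Ps = {} \<and> Q = {} \<longrightarrow> T1_separated (Tbar (chron A G T)) (P, Ps) (Q, Qs))"
proof -
  let ?r = "chron A G T"
  have part1: "T1_separated (Tbar ?r) (P, Ps) (Q, Qs)"
    if "P \<noteq> {}" "Ps \<noteq> {}" "Q \<noteq> {}" "Qs \<noteq> {}" "Ps \<noteq> Qs"
    using Rpf_T1_separated Rpf_if_Mbar Pbar Qbar that by blast
  have endpoint: "\<not> future_endpoint ?r \<gamma> (Q, Qs)"
    if "P \<noteq> {}" "Ps \<noteq> {}" "Q \<noteq> {}" "Qs \<noteq> {}" "P \<noteq> Q"
      and \<gamma>: "ftl_curve A G T \<gamma>" "(\<Union>t\<in>{0..<1}. Ipast ?r {\<gamma> t}) = P" for \<gamma>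
  proof (rule not_future_endpoint_of_chain[OF transp_chron[OF st] ftl_curve_monotone_chron[OF st \<gamma>(1)]])
    show "(Q, Qs) \<in> Rpf ?r"
      using Rpf_if_Mbar[OF Qbar] that by blast
    show "IP ?r P"
      using Rpf_if_Mbar[OF Pbar] that unfolding Rpf_def by blast
  qed (use that in auto)
  have part2: "T0_separated (Tbar ?r) (P, Ps) (Q, Qs)" if "Ps \<noteq> {}" "Qs = {}"
    using T0_separated_future_boundary Pbar Qbar that by blast
  have part3: "T1_separated (Tbar ?r) (P, Ps) (Q, Qs)" if "Ps = {}" "Qs = {}"
    using T1_separated_future_boundary Pbar Qbar neq that by blast
  have part4: "T1_separated (Tbar ?r) (P, Ps) (Q, Qs)" if "Ps = {}" "Q = {}"
    using T1_separated_future_past_boundary Pbar Qbar that by blast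
  show ?thesis
    unfolding future_endpoint_def[symmetric]
    using part1 endpoint part2 part3 part4 by auto
qed

end
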